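(* Let $M=(Q_M,\Sigma,\delta_M,s_M,F_M)$ be a complete DFA with $m\ge 2$ states and $N=(Q_N,\Sigma,\delta_N,s_N,F_N)$ a complete DFA with $n\ge 1$ states over the same alphabet, and suppose $k:=|F_M\setminus\{s_M\}|\ge 1$. Then there exists a complete DFA with at most $(2^{m-1}+2^{m-k-1})\cdot n-n+1$ states that accepts $L(M)^*\cup L(N)$.
   Context: A DFA is a 5-tuple $(Q,\Sigma,\delta,s,F)$ with finite state set $Q$, finite alphabet $\Sigma$, transition function $\delta:Q\times\Sigma\to Q$ (total, i.e. the DFA is complete), initial state $s$ and final states $F\subseteq Q$; $L(M)$ is the language it accepts. For a language $L$, $L^*$ denotes its Kleene star. *)

theory Defs
  imports Main
begin

record ('q, 'a) dfa =
  states :: "'q set"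
  delta  :: "'q \<Rightarrow> 'a \<Rightarrow> 'q"
  start  :: 'q
  finals :: "'q set"

definition complete_dfa :: "'a set \<Rightarrow> ('q, 'a) dfa \<Rightarrow> bool" where
  "complete_dfa Alph M \<longleftrightarrow>
     finite Alph \<and> finite (states M) \<and> start M \<in> states M \<and> finals M \<subseteq> states M \<and>
     (\<forall>q \<in> states M. \<forall>a \<in> Alph. delta M q a \<in> states M)"

definition delta_hat :: "('q, 'a) dfa \<Rightarrow> 'q \<Rightarrow> 'a list \<Rightarrow> 'q" where
  "delta_hat M q w = foldl (delta M) q w"

definition lang :: "'a set \<Rightarrow> ('q, 'a) dfa \<Rightarrow> 'a list set" where
  "lang Alph M = {w. set w \<subseteq> Alph \<and> delta_hat M (start M) w \<in> finals M}"

definition kstar :: "'a list set \<Rightarrow> 'a list set" where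
  "kstar L = {concat ws | ws. set ws \<subseteq> L}"

end

theory Submission
  imports Defs
begin

(* A word w lies in L(M)^* iff w is empty or w = u v with u in L(M)^* and
   v a nonempty word of L(M).  So while reading w it suffices to remember the set
   X(w) of states of M reached from s_M by the suffixes v of w whose prefix u lies in
   L(M)^*.  These sets obey a deterministic recurrence ("star step"): apply the letter to
   every state and add s_M whenever a final state is hit.  Every set arising after a
   nonempty word is nonempty and contains s_M as soon as it contains a final state;
   there are at most 2^(m-1) + 2^(m-k-1) - 1 such "star-closed" sets.  Running this
   subset automaton in parallel with N, with one extra initial state for the empty
   word, gives a DFA for L(M)^* \<union> L(N) with at most (2^(m-1) + 2^(m-k-1) - 1) n + 1
   states. *)

lemma delta_hat_Nil [simp]: "delta_hat M q [] = q"
  by (simp add: delta_hat_def)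

lemma delta_hat_snoc [simp]: "delta_hat M q (v @ [a]) = delta M (delta_hat M q v) a"
  by (simp add: delta_hat_def)

lemma delta_hat_Cons [simp]: "delta_hat M q (a # v) = delta_hat M (delta M q a) v"
  by (simp add: delta_hat_def)

lemma delta_hat_closed:
  "complete_dfa Alph D \<Longrightarrow> q \<in> states D \<Longrightarrow> set w \<subseteq> Alph \<Longrightarrow> delta_hat D q w \<in> states D"
  by (induction w arbitrary: q) (auto simp: complete_dfa_def)

lemma kstar_Nil: "[] \<in> kstar L"
  unfolding kstar_def by (rule CollectI, rule exI[of _ "[]"]) simp

lemma kstar_append: "u \<in> kstar L \<Longrightarrow> v \<in> L \<Longrightarrow> u @ v \<in> kstar L"
proof -
  assume "u \<in> kstar L" "v \<in> L"
  then obtain ws where "set ws \<subseteq> L" "u = concat ws" unfolding kstar_def by blast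
  then have "set (ws @ [v]) \<subseteq> L" "u @ v = concat (ws @ [v])" using \<open>v \<in> L\<close> by auto
  then show ?thesis unfolding kstar_def by blast
qed

lemma kstar_alph: "w \<in> kstar (lang Alph M) \<Longrightarrow> set w \<subseteq> Alph"
proof -
  assume "w \<in> kstar (lang Alph M)"
  then obtain ws where ws: "set ws \<subseteq> lang Alph M" "w = concat ws" unfolding kstar_def by blast
  then have "\<forall>x \<in> set ws. set x \<subseteq> Alph" unfolding lang_def by blast
  then show ?thesis using ws(2) by auto
qed

(* A nonempty word of L^* ends with a nonempty factor from L; the factorisation
   induction drops empty factors from the end. *)
lemma kstar_last_factor:
  assumes "x \<in> kstar L" "x \<noteq> []"
  shows "\<exists>u v. x = u @ v \<and> u \<in> kstar L \<and> v \<in> L \<and> v \<noteq> []"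
proof -
  obtain ws where ws: "set ws \<subseteq> L" "x = concat ws" using assms(1) unfolding kstar_def by blast
  have "concat ws \<noteq> [] \<Longrightarrow> set ws \<subseteq> L \<Longrightarrow>
        \<exists>u v. concat ws = u @ v \<and> u \<in> kstar L \<and> v \<in> L \<and> v \<noteq> []"
  proof (induction ws rule: rev_induct)
    case Nil then show ?case by simp
  next
    case (snoc z ws)
    show ?case
    proof (cases "z = []")
      case True
      then show ?thesis using snoc by auto
    next
      case False
      have "concat ws \<in> kstar L" using snoc.prems(2) unfolding kstar_def by auto
      then show ?thesis using False snoc.prems(2) by auto
    qed
  qed
  then show ?thesis using ws assms(2) by blast
qed

section \<open>The star-step recurrence\<close>

definition star_step :: "('q, 'a) dfa \<Rightarrow> 'q set \<Rightarrow> 'a \<Rightarrow> 'q set" where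
  "star_step M P a = (if (\<lambda>q. delta M q a) ` P \<inter> finals M \<noteq> {}
     then insert (start M) ((\<lambda>q. delta M q a) ` P) else (\<lambda>q. delta M q a) ` P)"

definition star_reach :: "'a set \<Rightarrow> ('q, 'a) dfa \<Rightarrow> 'a list \<Rightarrow> 'q set" where
  "star_reach Alph M w =
     {delta_hat M (start M) v | u v. w = u @ v \<and> u \<in> kstar (lang Alph M)}"

lemma star_reach_Nil: "star_reach Alph M [] = {start M}"
  unfolding star_reach_def using kstar_Nil by fastforce

lemma star_reach_image:
  "x \<in> (\<lambda>q. delta M q a) ` star_reach Alph M w \<longleftrightarrow>
   (\<exists>u v. w @ [a] = u @ v \<and> u \<in> kstar (lang Alph M) \<and> v \<noteq> [] \<and> x = delta_hat M (start M) v)"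
proof
  assume "x \<in> (\<lambda>q. delta M q a) ` star_reach Alph M w"
  then obtain u v where "w = u @ v" "u \<in> kstar (lang Alph M)"
      "x = delta M (delta_hat M (start M) v) a"
    unfolding star_reach_def by blast
  then show "\<exists>u v. w @ [a] = u @ v \<and> u \<in> kstar (lang Alph M) \<and> v \<noteq> []
      \<and> x = delta_hat M (start M) v"
    by (intro exI[of _ u] exI[of _ "v @ [a]"]) simp
next
  assume "\<exists>u v. w @ [a] = u @ v \<and> u \<in> kstar (lang Alph M) \<and> v \<noteq> [] \<and> x = delta_hat M (start M) v"
  then obtain u v where h: "w @ [a] = u @ v" "u \<in> kstar (lang Alph M)" "v \<noteq> []"
      "x = delta_hat M (start M) v" by blast
  obtain v0 b where v: "v = v0 @ [b]" using h(3) by (cases v rule: rev_exhaust) auto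
  then have "w = u @ v0" "b = a" using h(1) by auto
  then have "delta_hat M (start M) v0 \<in> star_reach Alph M w"
    unfolding star_reach_def using h(2) by blast
  then show "x \<in> (\<lambda>q. delta M q a) ` star_reach Alph M w" using h(4) v \<open>b = a\<close> by simp
qed

lemma kstar_snoc_iff:
  assumes "set (w @ [a]) \<subseteq> Alph"
  shows "w @ [a] \<in> kstar (lang Alph M) \<longleftrightarrow>
         (\<lambda>q. delta M q a) ` star_reach Alph M w \<inter> finals M \<noteq> {}"
proof
  assume "w @ [a] \<in> kstar (lang Alph M)"
  then obtain u v where "w @ [a] = u @ v" "u \<in> kstar (lang Alph M)" "v \<in> lang Alph M" "v \<noteq> []"
    using kstar_last_factor by blast
  then show "(\<lambda>q. delta M q a) ` star_reach Alph M w \<inter> finals M \<noteq> {}"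
    unfolding star_reach_image lang_def disjoint_iff by blast
next
  assume "(\<lambda>q. delta M q a) ` star_reach Alph M w \<inter> finals M \<noteq> {}"
  then obtain u v where h: "w @ [a] = u @ v" "u \<in> kstar (lang Alph M)"
      "delta_hat M (start M) v \<in> finals M"
    unfolding disjoint_iff star_reach_image by blast
  have "set v \<subseteq> Alph" using assms h(1) by (metis le_sup_iff set_append)
  then have "v \<in> lang Alph M" using h(3) unfolding lang_def by auto
  then show "w @ [a] \<in> kstar (lang Alph M)" using h(1,2) kstar_append by metis
qed

(* The empty suffix contributes s_M exactly when the whole word lies in L(M)^*. *)
lemma star_reach_snoc_split:
  "star_reach Alph M (w @ [a]) = (\<lambda>q. delta M q a) ` star_reach Alph M w \<union>
     (if w @ [a] \<in> kstar (lang Alph M) then {start M} else {})"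
proof (rule set_eqI)
  fix x
  have "x \<in> star_reach Alph M (w @ [a]) \<longleftrightarrow>
        (\<exists>u v. w @ [a] = u @ v \<and> u \<in> kstar (lang Alph M) \<and> v \<noteq> [] \<and> x = delta_hat M (start M) v)
        \<or> (w @ [a] \<in> kstar (lang Alph M) \<and> x = start M)"
  proof
    assume "x \<in> star_reach Alph M (w @ [a])"
    then obtain u v where "w @ [a] = u @ v" "u \<in> kstar (lang Alph M)" "x = delta_hat M (start M) v"
      unfolding star_reach_def by blast
    then show "(\<exists>u v. w @ [a] = u @ v \<and> u \<in> kstar (lang Alph M) \<and> v \<noteq> [] \<and> x = delta_hat M (start M) v)
        \<or> (w @ [a] \<in> kstar (lang Alph M) \<and> x = start M)"
      by (cases "v = []") auto
  next
    assume "(\<exists>u v. w @ [a] = u @ v \<and> u \<in> kstar (lang Alph M) \<and> v \<noteq> [] \<and> x = delta_hat M (start M) v)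
        \<or> (w @ [a] \<in> kstar (lang Alph M) \<and> x = start M)"
    then show "x \<in> star_reach Alph M (w @ [a])"
    proof
      assume "w @ [a] \<in> kstar (lang Alph M) \<and> x = start M"
      then have "w @ [a] = (w @ [a]) @ [] \<and> w @ [a] \<in> kstar (lang Alph M) \<and> x = delta_hat M (start M) []"
        by simp
      then show ?thesis unfolding star_reach_def by blast
    qed (auto simp: star_reach_def)
  qed
  then have "x \<in> star_reach Alph M (w @ [a]) \<longleftrightarrow>
      x \<in> (\<lambda>q. delta M q a) ` star_reach Alph M w \<or> (w @ [a] \<in> kstar (lang Alph M) \<and> x = start M)"
    by (simp only: star_reach_image)
  then show "x \<in> star_reach Alph M (w @ [a]) \<longleftrightarrow>
      x \<in> (\<lambda>q. delta M q a) ` star_reach Alph M w \<union>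
        (if w @ [a] \<in> kstar (lang Alph M) then {start M} else {})"
    by auto
qed

lemma star_reach_snoc:
  assumes "set (w @ [a]) \<subseteq> Alph"
  shows "star_reach Alph M (w @ [a]) = star_step M (star_reach Alph M w) a"
  unfolding star_reach_snoc_split star_step_def kstar_snoc_iff[OF assms] by auto

lemma star_step_fold:
  "set w \<subseteq> Alph \<Longrightarrow> foldl (star_step M) {start M} w = star_reach Alph M w"
proof (induction w rule: rev_induct)
  case Nil then show ?case by (simp add: star_reach_Nil)
next
  case (snoc a w)
  then show ?case using star_reach_snoc[OF snoc.prems, of M] by simp
qed

lemma star_reach_accept:
  assumes "set w \<subseteq> Alph"
  shows "(w = [] \<or> star_reach Alph M w \<inter> finals M \<noteq> {}) \<longleftrightarrow> w \<in> kstar (lang Alph M)"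
proof
  assume "w = [] \<or> star_reach Alph M w \<inter> finals M \<noteq> {}"
  then show "w \<in> kstar (lang Alph M)"
  proof
    assume "star_reach Alph M w \<inter> finals M \<noteq> {}"
    then obtain u v where h: "w = u @ v" "u \<in> kstar (lang Alph M)"
        "delta_hat M (start M) v \<in> finals M"
      unfolding star_reach_def by blast
    then have "v \<in> lang Alph M" using assms unfolding lang_def by auto
    then show ?thesis using h kstar_append by metis
  qed (simp add: kstar_Nil)
next
  assume "w \<in> kstar (lang Alph M)"
  show "w = [] \<or> star_reach Alph M w \<inter> finals M \<noteq> {}"
  proof (cases "w = []")
    case False
    then obtain u v where "w = u @ v" "u \<in> kstar (lang Alph M)" "v \<in> lang Alph M"
      using kstar_last_factor \<open>w \<in> kstar _\<close> by blast
    then have "delta_hat M (start M) v \<in> star_reach Alph M w \<inter> finals M"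
      unfolding star_reach_def lang_def by auto
    then show ?thesis by blast
  qed simp
qed

section \<open>Star-closed sets and their number\<close>

definition star_closed_sets :: "('q, 'a) dfa \<Rightarrow> 'q set set" where
  "star_closed_sets M =
     {P. P \<subseteq> states M \<and> P \<noteq> {} \<and> (P \<inter> finals M \<noteq> {} \<longrightarrow> start M \<in> P)}"

lemma start_star_closed: "complete_dfa Alph M \<Longrightarrow> {start M} \<in> star_closed_sets M"
  unfolding star_closed_sets_def complete_dfa_def by auto

lemma star_step_closed:
  assumes "complete_dfa Alph M" "P \<in> star_closed_sets M" "a \<in> Alph"
  shows "star_step M P a \<in> star_closed_sets M"
  using assms unfolding star_closed_sets_def star_step_def complete_dfa_def by auto

(* Sets containing s_M: 2^(m-1) of them; sets avoiding s_M avoid F_M as well and are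
   nonempty subsets of Q_M - F_M - {s_M}: 2^(m-k-1) - 1 of them. *)
lemma card_star_closed_sets:
  assumes "complete_dfa Alph M" "m = card (states M)" "k = card (finals M - {start M})"
  shows "card (star_closed_sets M) \<le> 2 ^ (m - 1) + (2 ^ (m - k - 1) - 1)"
proof -
  let ?Q = "states M" and ?s = "start M" and ?F = "finals M"
  have finQ: "finite ?Q" and sQ: "?s \<in> ?Q" and FQ: "?F \<subseteq> ?Q"
    using assms(1) unfolding complete_dfa_def by auto
  define A where "A = insert ?s ` Pow (?Q - {?s})"
  define B where "B = Pow (?Q - ?F - {?s}) - {{}}"
  have inj: "inj_on (insert ?s) (Pow (?Q - {?s}))"
    by (rule inj_onI) (metis Diff_insert_absorb PowD subset_Diff_insert)
  have card_A: "card A = 2 ^ (m - 1)"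
    unfolding A_def using card_image[OF inj] card_Pow[of "?Q - {?s}"] card_Diff_singleton[OF sQ]
      assms(2) finQ by simp
  have "?Q - ?F - {?s} = (?Q - {?s}) - (?F - {?s})" by blast
  then have "card (?Q - ?F - {?s}) = (m - 1) - k"
    using card_Diff_subset[of "?F - {?s}" "?Q - {?s}"] finQ FQ assms(2,3)
      card_Diff_singleton[OF sQ] by (simp add: finite_subset Diff_mono)
  then have card_B: "card B = 2 ^ (m - k - 1) - 1"
    unfolding B_def using card_Pow[of "?Q - ?F - {?s}"] finQ by (simp add: card_Diff_singleton)
  have "star_closed_sets M \<subseteq> A \<union> B"
  proof
    fix P assume P: "P \<in> star_closed_sets M"
    show "P \<in> A \<union> B"
    proof (cases "?s \<in> P")
      case True
      then have "P = insert ?s (P - {?s})" "P - {?s} \<in> Pow (?Q - {?s})"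
        using P unfolding star_closed_sets_def by auto
      then show ?thesis unfolding A_def by blast
    next
      case False
      then show ?thesis using P unfolding star_closed_sets_def B_def by auto
    qed
  qed
  moreover have "finite A" "finite B" unfolding A_def B_def using finQ by simp_all
  ultimately have "card (star_closed_sets M) \<le> card A + card B"
    by (meson card_Un_le card_mono finite_UnI order_trans)
  then show ?thesis using card_A card_B by simp
qed

section \<open>The automaton for L(M)^* \<union> L(N)\<close>

(* The star component of a product state; None is the fresh initial state, which
   behaves like {s_M} but accepts. *)
definition star_part :: "('q, 'a) dfa \<Rightarrow> 'q set option \<Rightarrow> 'q set" where
  "star_part M x = (case x of None \<Rightarrow> {start M} | Some P \<Rightarrow> P)"

definition star_union_dfa :: "('q, 'a) dfa \<Rightarrow> ('p, 'a) dfa \<Rightarrow> ('q set option \<times> 'p, 'a) dfa" where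
  "star_union_dfa M N =
    \<lparr>states = insert (None, start N) (Some ` star_closed_sets M \<times> states N),
     delta = (\<lambda>xp a. (Some (star_step M (star_part M (fst xp)) a), delta N (snd xp) a)),
     start = (None, start N),
     finals = {xp \<in> insert (None, start N) (Some ` star_closed_sets M \<times> states N).
        fst xp = None \<or> (\<exists>P. fst xp = Some P \<and> P \<inter> finals M \<noteq> {}) \<or> snd xp \<in> finals N}\<rparr>"

lemma star_union_complete:
  assumes "complete_dfa Alph M" "complete_dfa Alph N"
  shows "complete_dfa Alph (star_union_dfa M N)"
proof -
  have "finite (star_closed_sets M)"
    by (rule finite_subset[of _ "Pow (states M)"])
       (use assms(1) in \<open>auto simp: star_closed_sets_def complete_dfa_def\<close>)
  then have fin: "finite (states (star_union_dfa M N))"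
    using assms(2) unfolding star_union_dfa_def complete_dfa_def by auto
  have "delta (star_union_dfa M N) q a \<in> states (star_union_dfa M N)"
    if q: "q \<in> states (star_union_dfa M N)" and a: "a \<in> Alph" for q a
  proof -
    obtain x p where qe: "q = (x, p)" by (cases q)
    have "star_part M x \<in> star_closed_sets M"
      using q qe start_star_closed[OF assms(1)]
      unfolding star_union_dfa_def star_part_def by (cases x) auto
    then have "star_step M (star_part M x) a \<in> star_closed_sets M"
      using star_step_closed[OF assms(1) _ a] by blast
    moreover have "p \<in> states N"
      using q qe assms(2) unfolding star_union_dfa_def complete_dfa_def by auto
    then have "delta N p a \<in> states N" using a assms(2) unfolding complete_dfa_def by auto
    ultimately show ?thesis using qe unfolding star_union_dfa_def by auto
  qed
  then show ?thesis using fin assms unfolding complete_dfa_def star_union_dfa_def by auto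
qed

lemma star_union_delta_hat:
  "delta_hat (star_union_dfa M N) (start (star_union_dfa M N)) w =
     (if w = [] then None else Some (foldl (star_step M) {start M} w), delta_hat N (start N) w)"
proof -
  have "delta_hat (star_union_dfa M N) (Some P, p) w =
        (Some (foldl (star_step M) P w), delta_hat N p w)" for P p
    by (induction w arbitrary: P p) (auto simp: star_union_dfa_def star_part_def)
  then show ?thesis
    by (cases w) (auto simp: star_union_dfa_def star_part_def)
qed

lemma star_union_lang:
  assumes "complete_dfa Alph M" "complete_dfa Alph N"
  shows "lang Alph (star_union_dfa M N) = kstar (lang Alph M) \<union> lang Alph N"
proof (rule set_eqI)
  fix w
  show "w \<in> lang Alph (star_union_dfa M N) \<longleftrightarrow> w \<in> kstar (lang Alph M) \<union> lang Alph N"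
  proof (cases "set w \<subseteq> Alph")
    case True
    let ?D = "star_union_dfa M N"
    have "start ?D \<in> states ?D"
      using star_union_complete[OF assms] unfolding complete_dfa_def by auto
    then have "delta_hat ?D (start ?D) w \<in> states ?D"
      using delta_hat_closed[OF star_union_complete[OF assms] _ True] by blast
    then have "delta_hat ?D (start ?D) w \<in> finals ?D \<longleftrightarrow>
        (w = [] \<or> star_reach Alph M w \<inter> finals M \<noteq> {}) \<or> delta_hat N (start N) w \<in> finals N"
      unfolding star_union_delta_hat star_step_fold[OF True] by (simp add: star_union_dfa_def)
    then show ?thesis using True star_reach_accept[OF True, of M] unfolding lang_def by auto
  next
    case False
    then show ?thesis using kstar_alph unfolding lang_def by blast
  qed
qed

lemma card_star_union_states:
  "card (states (star_union_dfa M N)) \<le> 1 + card (star_closed_sets M) * card (states N)"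
proof -
  have "card (states (star_union_dfa M N)) \<le> Suc (card (Some ` star_closed_sets M \<times> states N))"
    unfolding star_union_dfa_def by (simp add: card_insert_le_m1 card_insert_if)
  also have "card (Some ` star_closed_sets M \<times> states N) = card (star_closed_sets M) * card (states N)"
    by (simp add: card_cartesian_product card_image)
  finally show ?thesis by simp
qed

section \<open>Renaming states into nat\<close>

lemma rename_states_nat:
  fixes D :: "('r, 'a) dfa"
  assumes "complete_dfa Alph D"
  shows "\<exists>D' :: (nat, 'a) dfa. complete_dfa Alph D' \<and> card (states D') = card (states D)
            \<and> lang Alph D' = lang Alph D"
proof -
  have fs: "finite (states D)" "start D \<in> states D" "finals D \<subseteq> states D"
    using assms unfolding complete_dfa_def by auto
  obtain f :: "'r \<Rightarrow> nat" where inj: "inj_on f (states D)"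
    using finite_imp_inj_to_nat_seg[OF fs(1)] by blast
  define g where "g = inv_into (states D) f"
  have gf: "\<And>q. q \<in> states D \<Longrightarrow> g (f q) = q" unfolding g_def using inj by simp
  define D' :: "(nat, 'a) dfa" where
    "D' = \<lparr>states = f ` states D, delta = (\<lambda>x a. f (delta D (g x) a)),
           start = f (start D), finals = f ` finals D\<rparr>"
  have "complete_dfa Alph D'" using assms gf unfolding complete_dfa_def D'_def by auto
  moreover have dh: "delta_hat D' (f q) w = f (delta_hat D q w)"
    if "q \<in> states D" "set w \<subseteq> Alph" for q w
    using that
  proof (induction w arbitrary: q)
    case (Cons a w)
    have "delta D q a \<in> states D" using assms Cons.prems unfolding complete_dfa_def by auto
    then show ?case using Cons gf by (simp add: D'_def)
  qed simp
  have "lang Alph D' = lang Alph D"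
  proof (rule set_eqI)
    fix w
    show "w \<in> lang Alph D' \<longleftrightarrow> w \<in> lang Alph D"
    proof (cases "set w \<subseteq> Alph")
      case True
      have "delta_hat D (start D) w \<in> states D" using delta_hat_closed[OF assms fs(2) True] .
      then have "f (delta_hat D (start D) w) \<in> f ` finals D \<longleftrightarrow> delta_hat D (start D) w \<in> finals D"
        using inj fs(3) by (auto dest: inj_onD)
      then show ?thesis using True dh[OF fs(2) True] unfolding lang_def by (simp add: D'_def)
    qed (auto simp: lang_def)
  qed
  moreover have "card (states D') = card (states D)"
    using card_image[OF inj] by (simp add: D'_def)
  ultimately show ?thesis by blast
qed

theorem theorem1:
  fixes Alph :: "'a set"
    and M :: "('q, 'a) dfa"
    and N :: "('p, 'a) dfa"
    and m n k :: nat
  assumes "complete_dfa Alph M"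
    and "complete_dfa Alph N"
    and "m = card (states M)" and "m \<ge> 2"
    and "n = card (states N)" and "n \<ge> 1"
    and "k = card (finals M - {start M})" and "k \<ge> 1"
  shows "\<exists>D :: (nat, 'a) dfa. complete_dfa Alph D \<and>
           card (states D) \<le> (2 ^ (m - 1) + 2 ^ (m - k - 1)) * n - n + 1 \<and>
           lang Alph D = kstar (lang Alph M) \<union> lang Alph N"
proof -
  obtain D :: "(nat, 'a) dfa" where D: "complete_dfa Alph D"
      "card (states D) = card (states (star_union_dfa M N))"
      "lang Alph D = kstar (lang Alph M) \<union> lang Alph N"
    using rename_states_nat[OF star_union_complete[OF assms(1,2)]]
      star_union_lang[OF assms(1,2)] by metis
  define S :: nat where "S = 2 ^ (m - 1) + 2 ^ (m - k - 1)"
  have "S \<ge> 1" unfolding S_def using one_le_power[of "2::nat" "m - 1"] by linarith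
  have "card (star_closed_sets M) \<le> S - 1"
    using card_star_closed_sets[OF assms(1,3,7)] unfolding S_def by simp
  then have "card (star_closed_sets M) * n \<le> (S - 1) * n" by simp
  then have "card (states D) \<le> 1 + (S - 1) * n"
    using D(2) card_star_union_states[of M N] unfolding assms(5)[symmetric] by linarith
  also have "1 + (S - 1) * n = S * n - n + 1"
    using \<open>S \<ge> 1\<close> by (simp add: diff_mult_distrib)
  finally show ?thesis using D unfolding S_def by blast
qed

end
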